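(* Let $n\ge4$, $0<\alpha_2,\alpha_3<1$, $\alpha_1=1-\alpha_2-\alpha_3$, $\lambda^*=\big(\frac{n-1+\alpha_1}{n},\frac{\alpha_2}{n},\frac{\alpha_3}{n}\big)$. Then $$|l_{(n-2,1,1)}(\lambda^* )|\le\frac{2}{e(\ln n-1)}\binom{n}{n-2}.$$
   Context: For an integer $n\ge1$ and $i=(i_1,i_2,i_3)\in\mathbb{Z}_+^3$ with $i_1+i_2+i_3=n$, $l_i(\lambda)=\prod_{s=1}^{3}\frac{1}{i_s!}\prod_{t=0}^{i_s-1}(n\lambda_s-t)$ for $\lambda=(\lambda_1,\lambda_2,\lambda_3)$ (Lagrange fundamental polynomials for the equally spaced nodes $i/n$ of a triangle in barycentric coordinates). *)

theory Defs
  imports Complex_Main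
begin

text \<open>Lagrange fundamental polynomial for the equally spaced nodes i/n of a triangle,
  in barycentric coordinates; i = (i1,i2,i3) with i1+i2+i3 = n.\<close>

definition lag_factor :: "nat \<Rightarrow> nat \<Rightarrow> real \<Rightarrow> real" where
  "lag_factor n k x = (\<Prod>t<k. (real n * x - real t)) / fact k"

definition lagr :: "nat \<Rightarrow> nat \<times> nat \<times> nat \<Rightarrow> real \<times> real \<times> real \<Rightarrow> real" where
  "lagr n i lam = (case i of (i1, i2, i3) \<Rightarrow> case lam of (l1, l2, l3) \<Rightarrow>
     lag_factor n i1 l1 * lag_factor n i2 l2 * lag_factor n i3 l3)"

end

theory Submission
  imports Defs
begin

text \<open>With s = a2 + a3 the value equals a2 a3 (prod j < n-2. j + 3 - s) / (n-2)!.
  Bounding each factor j + 3 - s by (j + 3) exp(-s/(j + 3)) gives at most n!/2 exp(-s H), where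
  the harmonic-type sum H = (sum j < n-2. 1/(j + 3)) is at least (ln n - 1)/4. Since a2 a3 \<le> s/2,
  the elementary bound s exp(-c s) \<le> 1/(e c) then eliminates s.\<close>

lemma diff_le_mult_exp_neg_divide:
  fixes a s :: real
  assumes "0 < a"
  shows "a - s \<le> a * exp (- s / a)"
proof -
  have "a - s = a * (1 - s / a)"
    using assms by (simp add: field_simps)
  also have "\<dots> \<le> a * exp (- s / a)"
    using exp_ge_add_one_self[of "- s / a"] assms by (intro mult_left_mono) auto
  finally show ?thesis .
qed

lemma prod_diff_le_prod_mult_exp_sum_inverse:
  fixes a :: "'a \<Rightarrow> real" and s :: real
  assumes "\<And>j. j \<in> A \<Longrightarrow> 0 < a j" and "\<And>j. j \<in> A \<Longrightarrow> s \<le> a j"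
  shows "(\<Prod>j\<in>A. a j - s) \<le> (\<Prod>j\<in>A. a j) * exp (- s * (\<Sum>j\<in>A. 1 / a j))"
proof -
  have "(\<Prod>j\<in>A. a j - s) \<le> (\<Prod>j\<in>A. a j * exp (- s / a j))"
  proof (rule prod_mono)
    fix j
    assume "j \<in> A"
    then show "0 \<le> a j - s \<and> a j - s \<le> a j * exp (- s / a j)"
      using assms diff_le_mult_exp_neg_divide[of "a j" s] by simp
  qed
  also have "\<dots> = (\<Prod>j\<in>A. a j) * exp (- s * (\<Sum>j\<in>A. 1 / a j))"
    by (cases "finite A")
      (simp_all add: prod.distrib exp_sum sum_distrib_left)
  finally show ?thesis .
qed

lemma prod_lessThan_of_nat_add_3:
  "(\<Prod>j<m. real j + 3) = fact (m + 2) / 2"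
  by (induction m) (simp_all add: algebra_simps)

lemma ln_le_sum_lessThan_inverse_add_3:
  assumes "1 \<le> m"
  shows "(ln (real m + 2) - 1) / 4 \<le> (\<Sum>j<m. 1 / (real j + 3))"
  using assms
proof (induction m rule: nat_induct_at_least)
  case base
  have "ln (3::real) \<le> 3 - 1"
    using ln_le_minus_one[of 3] by simp
  then show ?case by simp
next
  case (Suc m)
  have "ln (real m + 3) - ln (real m + 2) = ln ((real m + 3) / (real m + 2))"
    by (simp add: ln_div)
  also have "\<dots> \<le> (real m + 3) / (real m + 2) - 1"
    by (rule ln_le_minus_one) simp
  also have "\<dots> \<le> 4 / (real m + 3)"
    by (simp add: field_simps)
  finally show ?case
    using Suc.IH by (simp add: algebra_simps)
qed

lemma mult_exp_neg_mult_le: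
  fixes s c :: real
  assumes "0 < c"
  shows "s * exp (- c * s) \<le> 1 / (exp 1 * c)"
proof -
  have "c * s \<le> exp (c * s - 1)"
    using exp_ge_add_one_self[of "c * s - 1"] by simp
  then have "c * s * exp (- c * s) \<le> exp (c * s - 1) * exp (- c * s)"
    by (intro mult_right_mono) auto
  also have "\<dots> = exp (- 1)"
    by (simp flip: exp_add)
  also have "\<dots> = 1 / exp 1"
    by (simp add: exp_minus inverse_eq_divide)
  finally show ?thesis
    using assms by (simp add: field_simps)
qed

lemma mult_prod_lessThan_add_3_diff_le:
  assumes "2 \<le> m" and "0 \<le> s" and "s \<le> 3"
  shows "s * (\<Prod>j<m. real j + 3 - s) \<le> 2 * fact (m + 2) / (exp 1 * (ln (real m + 2) - 1))"
proof -
  define L where "L = ln (real m + 2) - 1"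
  have "exp 1 < real m + 2"
    using exp_le assms(1) by linarith
  then have L: "0 < L"
    using ln_less_cancel_iff[of "exp 1" "real m + 2"] by (simp add: L_def)
  have "(\<Prod>j<m. real j + 3 - s) \<le> fact (m + 2) / 2 * exp (- s * (\<Sum>j<m. 1 / (real j + 3)))"
    using prod_diff_le_prod_mult_exp_sum_inverse[of "{..<m}" "\<lambda>j. real j + 3" s] assms(3)
    by (simp add: prod_lessThan_of_nat_add_3)
  also have "\<dots> \<le> fact (m + 2) / 2 * exp (- (L / 4) * s)"
  proof -
    have "L / 4 * s \<le> (\<Sum>j<m. 1 / (real j + 3)) * s"
      using ln_le_sum_lessThan_inverse_add_3[of m] assms by (intro mult_right_mono) (simp_all add: L_def)
    then show ?thesis
      by (intro mult_left_mono) (simp_all add: mult.commute)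
  qed
  finally have "s * (\<Prod>j<m. real j + 3 - s) \<le> s * (fact (m + 2) / 2 * exp (- (L / 4) * s))"
    using assms(2) by (rule mult_left_mono)
  also have "\<dots> = fact (m + 2) / 2 * (s * exp (- (L / 4) * s))"
    by (rule mult.left_commute)
  also have "\<dots> \<le> fact (m + 2) / 2 * (4 / (exp 1 * L))"
    using mult_exp_neg_mult_le[of "L / 4" s] L by (intro mult_left_mono) simp_all
  also have "\<dots> = 2 * fact (m + 2) / (exp 1 * L)"
    by simp
  finally show ?thesis
    unfolding L_def .
qed

lemma lag_factor_1: "0 < n \<Longrightarrow> lag_factor n 1 (x / real n) = x"
  by (simp add: lag_factor_def)

lemma lag_factor_diff:
  assumes "2 \<le> n"
  shows "lag_factor n (n - 2) ((real n - s) / real n)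
           = (\<Prod>j<n - 2. real j + 3 - s) / fact (n - 2)"
proof -
  have "(\<Prod>t<n - 2. real n * ((real n - s) / real n) - real t)
        = (\<Prod>t<n - 2. real (n - 2 - Suc t) + 3 - s)"
    using assms by (intro prod.cong refl) (auto simp: of_nat_diff)
  also have "\<dots> = (\<Prod>j<n - 2. real j + 3 - s)"
    using prod.nat_diff_reindex[of "\<lambda>j. real j + 3 - s" "n - 2"] by simp
  finally show ?thesis
    by (simp add: lag_factor_def)
qed

lemma lagr_n_minus_2_1_1:
  assumes "2 \<le> n"
  shows "lagr n (n - 2, 1, 1) ((real n - s) / real n, a2 / real n, a3 / real n)
           = a2 * a3 * (\<Prod>j<n - 2. real j + 3 - s) / fact (n - 2)"
  using assms lag_factor_diff[OF assms, of s] lag_factor_1[of n a2] lag_factor_1[of n a3]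
  by (simp add: lagr_def)

theorem lemma24:
  fixes n :: nat and a1 a2 a3 :: real
  assumes "n \<ge> 4"
    and "0 < a2" "a2 < 1" "0 < a3" "a3 < 1"
    and "a1 = 1 - a2 - a3"
  shows "\<bar>lagr n (n - 2, 1, 1) ((real n - 1 + a1) / real n, a2 / real n, a3 / real n)\<bar>
         \<le> 2 / (exp 1 * (ln (real n) - 1)) * real (n choose (n - 2))"
proof -
  define s where "s = a2 + a3"
  define P where "P = (\<Prod>j<n - 2. real j + 3 - s)"
  have "real n - 1 + a1 = real n - s"
    by (simp add: assms(6) s_def)
  then have lagr_eq: "lagr n (n - 2, 1, 1) ((real n - 1 + a1) / real n, a2 / real n, a3 / real n)
      = a2 * a3 * P / fact (n - 2)"
    using assms(1) by (simp only: P_def lagr_n_minus_2_1_1)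
  have n_minus_2: "n - 2 + 2 = n" "real (n - 2) + 2 = real n"
    using assms(1) by auto
  have "0 \<le> P"
    using assms(2-5) by (auto simp: P_def s_def intro: prod_nonneg)
  have "a2 * a3 \<le> a2" "a2 * a3 \<le> a3"
    using assms(2-5) by (simp_all add: mult_left_le mult_right_le_one_le)
  then have "a2 * a3 * P \<le> s * P / 2"
    using \<open>0 \<le> P\<close> mult_right_mono[of "a2 * a3" "s / 2" P] by (simp add: s_def)
  moreover have "s * P \<le> 2 * (fact n / (exp 1 * (ln (real n) - 1)))"
    using mult_prod_lessThan_add_3_diff_le[of "n - 2" s, unfolded n_minus_2] assms(1-5)
    by (simp add: P_def s_def)
  ultimately have "a2 * a3 * P / fact (n - 2) \<le> fact n / (exp 1 * (ln (real n) - 1)) / fact (n - 2)"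
    by (intro divide_right_mono) simp_all
  moreover have "real (n choose (n - 2)) = fact n / (fact (n - 2) * 2)"
    using binomial_fact[of "n - 2" n] assms(1) by (simp add: numeral_2_eq_2 Suc_diff_Suc)
  ultimately show ?thesis
    using lagr_eq assms(2,4) \<open>0 \<le> P\<close> by simp
qed

end
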